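(* If $G$ is a nice connected graph of order $n$, maximum degree $\Delta$ and chromatic number $k$, then ${\rm ML}^{\rm W}(G) \leq 2k(n-1)+2\Delta$.
   Context: All graphs are finite and simple. A walk of a graph $G$ is a sequence of vertices $u_0u_1\dots u_p$ with $u_tu_{t+1}\in E(G)$ for all $t$ (vertices and edges may repeat); its length is $p$. For a walk $W$ of $G$, $G+W$ is the multigraph on $V(G)$ whose edge multiset consists of $E(G)$ together with each edge added as many times as $W$ traverses it. A multigraph is locally irregular if no two adjacent vertices have the same degree; a walk is irregularising if $G+W$ is locally irregular. A graph is nice if it is connected and not isomorphic to $K_2$. ${\rm ML}^{\rm W}(G)$ denotes the minimum length of an irregularising walk of $G$ (a walk of length $0$ is allowed). *)

theory Defs
  imports Main
begin

definition simple_graph :: "'a set \<Rightarrow> ('a \<Rightarrow> 'a \<Rightarrow> bool) \<Rightarrow> bool" where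
  "simple_graph V E \<longleftrightarrow> finite V \<and> (\<forall>u v. E u v \<longrightarrow> E v u)
     \<and> (\<forall>v. \<not> E v v) \<and> (\<forall>u v. E u v \<longrightarrow> u \<in> V \<and> v \<in> V)"

definition connected_graph :: "'a set \<Rightarrow> ('a \<Rightarrow> 'a \<Rightarrow> bool) \<Rightarrow> bool" where
  "connected_graph V E \<longleftrightarrow> V \<noteq> {} \<and> (\<forall>u\<in>V. \<forall>v\<in>V. E\<^sup>*\<^sup>* u v)"

definition is_K2 :: "'a set \<Rightarrow> ('a \<Rightarrow> 'a \<Rightarrow> bool) \<Rightarrow> bool" where
  "is_K2 V E \<longleftrightarrow> (\<exists>u v. u \<noteq> v \<and> V = {u, v} \<and> E u v)"

definition nice :: "'a set \<Rightarrow> ('a \<Rightarrow> 'a \<Rightarrow> bool) \<Rightarrow> bool" where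
  "nice V E \<longleftrightarrow> connected_graph V E \<and> \<not> is_K2 V E"

definition deg :: "'a set \<Rightarrow> ('a \<Rightarrow> 'a \<Rightarrow> bool) \<Rightarrow> 'a \<Rightarrow> nat" where
  "deg V E v = card {u \<in> V. E v u}"

definition max_degree :: "'a set \<Rightarrow> ('a \<Rightarrow> 'a \<Rightarrow> bool) \<Rightarrow> nat" where
  "max_degree V E = Max (deg V E ` V)"

definition chromatic_number :: "'a set \<Rightarrow> ('a \<Rightarrow> 'a \<Rightarrow> bool) \<Rightarrow> nat" where
  "chromatic_number V E =
     (LEAST k. \<exists>c :: 'a \<Rightarrow> nat. (\<forall>v\<in>V. c v < k) \<and> (\<forall>u v. E u v \<longrightarrow> c u \<noteq> c v))"

definition is_walk :: "'a set \<Rightarrow> ('a \<Rightarrow> 'a \<Rightarrow> bool) \<Rightarrow> 'a list \<Rightarrow> bool" where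
  "is_walk V E w \<longleftrightarrow> w \<noteq> [] \<and> set w \<subseteq> V \<and>
     (\<forall>i. Suc i < length w \<longrightarrow> E (w ! i) (w ! Suc i))"

definition walk_length :: "'a list \<Rightarrow> nat" where
  "walk_length w = length w - 1"

text \<open>Number of traversals by w of edges incident with v (edges are non-loops).\<close>
definition traversals :: "'a list \<Rightarrow> 'a \<Rightarrow> nat" where
  "traversals w v = card {i. Suc i < length w \<and> (w ! i = v \<or> w ! Suc i = v)}"

text \<open>Degree of v in the multigraph G+W.\<close>
definition deg_plus_walk :: "'a set \<Rightarrow> ('a \<Rightarrow> 'a \<Rightarrow> bool) \<Rightarrow> 'a list \<Rightarrow> 'a \<Rightarrow> nat" where
  "deg_plus_walk V E w v = deg V E v + traversals w v"

text \<open>G+W has the same adjacency as G (walk edges are edges of G).\<close>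
definition irregularising_walk :: "'a set \<Rightarrow> ('a \<Rightarrow> 'a \<Rightarrow> bool) \<Rightarrow> 'a list \<Rightarrow> bool" where
  "irregularising_walk V E w \<longleftrightarrow> is_walk V E w \<and>
     (\<forall>u v. E u v \<longrightarrow> deg_plus_walk V E w u \<noteq> deg_plus_walk V E w v)"

definition min_irreg_walk_length :: "'a set \<Rightarrow> ('a \<Rightarrow> 'a \<Rightarrow> bool) \<Rightarrow> nat" where
  "min_irreg_walk_length V E = (LEAST l. \<exists>w. irregularising_walk V E w \<and> walk_length w = l)"

end

theory Submission
  imports Defs
begin

text \<open>
  Fix a proper colouring c with k colours. It suffices to find a walk W such that the degree d(v)
  of every vertex in G + W satisfies (d(v) mod 2k) div 2 = c(v), for then adjacent vertices have
  different degrees. Grow a spanning tree from a root r and let \<sigma> be its bipartition. Splicing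
  back-and-forth detours along tree edges into a closed walk from r prescribes the number of
  traversals of every vertex modulo 2k, at a cost of at most 2k steps per non-root vertex, provided
  the halved targets t satisfy \<Sum> \<plusminus>t(v) = 0 (mod k), with signs given by \<sigma>. The targets encoding c
  are corrected by a detour of 2m steps along an edge pq with \<sigma>(p) = \<sigma>(q), which exists unless
  k \<le> 2 and shifts the signed sum by \<plusminus>2m, and, for even k, also by a walk of length at most two
  from r that changes its parity; this walk exists because G is not K2. As k \<le> \<Delta> + 1, the
  corrections cost at most 2\<Delta> steps.
\<close>

section \<open>Walks and traversal counts\<close>

lemma traversals_Nil [simp]: "traversals [] v = 0"
  by (simp add: traversals_def)

lemma traversals_singleton [simp]: "traversals [a] v = 0"
  by (simp add: traversals_def)

lemma traversals_Cons_Cons [simp]: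
  "traversals (a # b # w) v = of_bool (a = v \<or> b = v) + traversals (b # w) v"
proof -
  let ?I = "\<lambda>w. {i. Suc i < length w \<and> (w ! i = v \<or> w ! Suc i = v)}"
  have "?I (a # b # w) = (if a = v \<or> b = v then {0} else {}) \<union> Suc ` ?I (b # w)"
  proof (intro set_eqI iffI)
    fix i assume "i \<in> ?I (a # b # w)"
    then show "i \<in> (if a = v \<or> b = v then {0} else {}) \<union> Suc ` ?I (b # w)"
      by (cases i) auto
  qed (auto split: if_splits)
  moreover have "finite (?I (b # w))"
    by (rule finite_subset[of _ "{..<length (b # w)}"]) auto
  ultimately show ?thesis
    by (simp add: traversals_def card_image)
qed

lemma traversals_Cons:
  "w \<noteq> [] \<Longrightarrow> traversals (a # w) v = of_bool (a = v \<or> hd w = v) + traversals w v"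
  by (cases w) auto

lemma traversals_eq_0_if_notin: "v \<notin> set w \<Longrightarrow> traversals w v = 0"
  by (induction w rule: induct_list012) auto

lemma traversals_append_tl:
  assumes "xs \<noteq> []" "ys \<noteq> []" "last xs = hd ys"
  shows "traversals (xs @ tl ys) v = traversals xs v + traversals ys v"
  using assms
proof (induction xs rule: induct_list012)
  case (2 a)
  then show ?case by (cases ys) auto
next
  case (3 a b xs)
  then show ?case by simp
qed simp

lemma successively_append_tl:
  assumes "successively P xs" "successively P ys" "xs \<noteq> []" "last xs = hd ys"
  shows "successively P (xs @ tl ys)"
  using assms by (cases ys rule: remdups_adj.cases) (auto simp: successively_append_iff)

fun back_and_forth :: "'a \<Rightarrow> 'a \<Rightarrow> nat \<Rightarrow> 'a list" where
  "back_and_forth u v 0 = [u]"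
| "back_and_forth u v (Suc a) = u # v # back_and_forth u v a"

lemma back_and_forth_neq_Nil [simp]: "back_and_forth u v a \<noteq> []"
  by (cases a) auto

lemma hd_back_and_forth [simp]: "hd (back_and_forth u v a) = u"
  by (cases a) auto

lemma last_back_and_forth [simp]: "last (back_and_forth u v a) = u"
  by (induction a) auto

lemma length_back_and_forth [simp]: "length (back_and_forth u v a) = 2 * a + 1"
  by (induction a) auto

lemma set_back_and_forth: "set (back_and_forth u v a) = (if a = 0 then {u} else {u, v})"
  by (induction a) auto

lemma traversals_back_and_forth:
  "u \<noteq> v \<Longrightarrow> traversals (back_and_forth u v a) x = (if x = u \<or> x = v then 2 * a else 0)"
  by (induction a) (auto simp: traversals_Cons)

lemma successively_back_and_forth: "P u v \<Longrightarrow> P v u \<Longrightarrow> successively P (back_and_forth u v a)"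
  by (induction a) (auto simp: successively_Cons)

lemma splice_closed_walk:
  assumes "u \<in> set w" "C \<noteq> []" "hd C = u" "last C = u"
  obtains w' where "hd w' = hd w" "last w' = last w" "set w' = set w \<union> set C"
    "length w' = length w + length C - 1"
    "\<And>x. traversals w' x = traversals w x + traversals C x"
    "\<And>P. successively P w \<Longrightarrow> successively P C \<Longrightarrow> successively P w'"
proof -
  obtain xs ys where w: "w = xs @ u # ys" using assms(1) by (meson split_list)
  have C: "C = u # tl C" using assms(2,3) by (cases C) auto
  have w'_glue: "xs @ C @ ys = ((xs @ [u]) @ tl C) @ tl (u # ys)"
    by (subst C) simp
  have w_glue: "w = (xs @ [u]) @ tl (u # ys)"
    by (simp add: w)
  show thesis
  proof (rule that[of "xs @ C @ ys"])
    show "hd (xs @ C @ ys) = hd w" "last (xs @ C @ ys) = last w"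
      using assms(2-4) by (auto simp: w hd_append last_append)
    show "set (xs @ C @ ys) = set w \<union> set C"
      using assms(2,3) hd_in_set by (fastforce simp: w)
    show "length (xs @ C @ ys) = length w + length C - 1"
      using assms(2) by (simp add: w)
    have last_prefix: "last ((xs @ [u]) @ tl C) = u"
      using assms(2,4) C by (metis append_assoc append_Cons append_Nil last_appendR)
    show "traversals (xs @ C @ ys) x = traversals w x + traversals C x" for x
    proof -
      have "traversals (xs @ C @ ys) x = traversals ((xs @ [u]) @ tl C) x + traversals (u # ys) x"
        unfolding w'_glue using last_prefix by (intro traversals_append_tl) auto
      moreover have "traversals ((xs @ [u]) @ tl C) x = traversals (xs @ [u]) x + traversals C x"
        using assms(2,3) by (intro traversals_append_tl) auto
      moreover have "traversals w x = traversals (xs @ [u]) x + traversals (u # ys) x"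
        unfolding w_glue by (rule traversals_append_tl) auto
      ultimately show ?thesis by simp
    qed
    show "successively P (xs @ C @ ys)" if "successively P w" "successively P C" for P
    proof -
      have "successively P (xs @ [u])" "successively P (u # ys)"
        using that(1) by (auto simp: w successively_append_iff)
      then show ?thesis
        unfolding w'_glue using that(2) assms(2,3) last_prefix
        by (intro successively_append_tl) auto
    qed
  qed
qed

section \<open>Graphs and colourings\<close>

lemma simple_graphD:
  assumes "simple_graph V E"
  shows "finite V" "symp E" "\<And>v. \<not> E v v" "\<And>u v. E u v \<Longrightarrow> u \<in> V" "\<And>u v. E u v \<Longrightarrow> v \<in> V"
  using assms by (auto simp: simple_graph_def symp_def)

lemma is_walk_iff: "is_walk V E w \<longleftrightarrow> w \<noteq> [] \<and> set w \<subseteq> V \<and> successively E w"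
  by (simp add: is_walk_def successively_conv_nth)

lemma rtranclp_crosses_boundary:
  assumes "E\<^sup>*\<^sup>* x z" "x \<in> S" "z \<notin> S"
  shows "\<exists>u v. u \<in> S \<and> v \<notin> S \<and> E u v"
  using assms by (induction rule: rtranclp_induct) auto

lemma deg_le_max_degree: "finite V \<Longrightarrow> v \<in> V \<Longrightarrow> deg V E v \<le> max_degree V E"
  unfolding max_degree_def by simp

lemma max_degree_pos:
  assumes "simple_graph V E" "E a b"
  shows "0 < max_degree V E"
proof -
  have "b \<in> {u \<in> V. E a u}" using simple_graphD(5)[OF assms] assms(2) by simp
  then have "0 < deg V E a"
    unfolding deg_def using simple_graphD(1)[OF assms(1)] card_gt_0_iff by fastforce
  then show ?thesis
    using deg_le_max_degree[of V a E] simple_graphD(1,4)[OF assms(1)] assms(2) by fastforce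
qed

definition proper_colouring :: "'a set \<Rightarrow> ('a \<Rightarrow> 'a \<Rightarrow> bool) \<Rightarrow> nat \<Rightarrow> ('a \<Rightarrow> nat) \<Rightarrow> bool" where
  "proper_colouring V E k c \<longleftrightarrow> (\<forall>v\<in>V. c v < k) \<and> (\<forall>u v. E u v \<longrightarrow> c u \<noteq> c v)"

lemma chromatic_number_le: "proper_colouring V E k c \<Longrightarrow> chromatic_number V E \<le> k"
  unfolding chromatic_number_def proper_colouring_def by (rule Least_le) blast

lemma proper_colouring_chromatic_number:
  "proper_colouring V E k c \<Longrightarrow> \<exists>c. proper_colouring V E (chromatic_number V E) c"
  unfolding chromatic_number_def proper_colouring_def by (rule LeastI) blast

lemma greedy_colouring:
  assumes "simple_graph V E"
  shows "\<exists>c. proper_colouring V E (max_degree V E + 1) c"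
proof -
  note G = simple_graphD[OF assms]
  let ?D = "max_degree V E"
  have "\<exists>c. (\<forall>v\<in>F. c v \<le> ?D) \<and> (\<forall>u\<in>F. \<forall>v\<in>F. E u v \<longrightarrow> c u \<noteq> c v)" if "F \<subseteq> V" for F
    using finite_subset[OF that G(1)] that
  proof (induction F rule: finite_induct)
    case (insert x F)
    then obtain c where c: "\<forall>v\<in>F. c v \<le> ?D" "\<forall>u\<in>F. \<forall>v\<in>F. E u v \<longrightarrow> c u \<noteq> c v"
      by blast
    let ?used = "c ` {y \<in> F. E x y}"
    have "card ?used \<le> card {y \<in> F. E x y}"
      using insert.hyps(1) by (simp add: card_image_le)
    also have "\<dots> \<le> deg V E x"
      unfolding deg_def using G(1) insert.prems by (intro card_mono) auto
    also have "\<dots> \<le> ?D"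
      using deg_le_max_degree[OF G(1)] insert.prems by simp
    finally have "\<not> {0..?D} \<subseteq> ?used"
      using card_mono[of ?used "{0..?D}"] insert.hyps(1) by force
    then obtain col where col: "col \<le> ?D" "\<And>y. y \<in> F \<Longrightarrow> E x y \<Longrightarrow> col \<noteq> c y"
      by (metis (mono_tags, lifting) atLeastAtMost_iff image_eqI mem_Collect_eq subsetI)
    have "\<forall>u\<in>insert x F. \<forall>v\<in>insert x F. E u v \<longrightarrow> (c(x := col)) u \<noteq> (c(x := col)) v"
    proof (intro ballI impI)
      fix u v assume uv: "u \<in> insert x F" "v \<in> insert x F" "E u v"
      then consider "u = x" "v \<in> F" | "v = x" "u \<in> F" | "u \<in> F" "v \<in> F"
        using G(3) by blast
      then show "(c(x := col)) u \<noteq> (c(x := col)) v"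
      proof cases
        case 1
        then show ?thesis using col(2) uv(3) insert.hyps(2) by auto
      next
        case 2
        then show ?thesis using col(2) sympD[OF G(2) uv(3)] insert.hyps(2) by auto
      next
        case 3
        then show ?thesis using c(2) uv(3) insert.hyps(2) by auto
      qed
    qed
    then show ?case
      using c(1) col(1) by (intro exI[of _ "c(x := col)"]) simp
  qed simp
  then obtain c where "\<forall>v\<in>V. c v \<le> ?D" "\<forall>u\<in>V. \<forall>v\<in>V. E u v \<longrightarrow> c u \<noteq> c v"
    by blast
  then have "proper_colouring V E (?D + 1) c"
    unfolding proper_colouring_def using G(4,5) by (auto simp: less_Suc_eq_le)
  then show ?thesis by blast
qed

lemma exists_chromatic_colouring:
  "simple_graph V E \<Longrightarrow> \<exists>c. proper_colouring V E (chromatic_number V E) c"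
  by (metis greedy_colouring proper_colouring_chromatic_number)

lemma chromatic_number_le_max_degree:
  "simple_graph V E \<Longrightarrow> chromatic_number V E \<le> max_degree V E + 1"
  by (metis greedy_colouring chromatic_number_le)

lemma chromatic_number_le_2:
  fixes \<sigma> :: "'a \<Rightarrow> bool"
  assumes "\<forall>u v. E u v \<longrightarrow> \<sigma> u \<noteq> \<sigma> v"
  shows "chromatic_number V E \<le> 2"
proof (rule chromatic_number_le)
  show "proper_colouring V E 2 (\<lambda>v. of_bool (\<sigma> v))"
    using assms by (auto simp: proper_colouring_def)
qed

section \<open>Tours along a spanning tree with prescribed traversal counts\<close>

definition side_sign :: "('a \<Rightarrow> bool) \<Rightarrow> 'a \<Rightarrow> int" where
  "side_sign \<sigma> v = (if \<sigma> v then 1 else -1)"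

inductive_set tree_vertex_sets :: "('a \<Rightarrow> 'a \<Rightarrow> bool) \<Rightarrow> 'a \<Rightarrow> 'a set set" for E r where
  root: "{r} \<in> tree_vertex_sets E r"
| leaf: "S \<in> tree_vertex_sets E r \<Longrightarrow> u \<in> S \<Longrightarrow> v \<notin> S \<Longrightarrow> E u v \<Longrightarrow>
    insert v S \<in> tree_vertex_sets E r"

lemma tree_vertex_sets_finite_root:
  "S \<in> tree_vertex_sets E r \<Longrightarrow> finite S \<and> r \<in> S"
  by (induction rule: tree_vertex_sets.induct) auto

lemma connected_in_tree_vertex_sets:
  assumes "finite V" "r \<in> V" "\<And>v. v \<in> V \<Longrightarrow> E\<^sup>*\<^sup>* r v" "\<And>u v. E u v \<Longrightarrow> v \<in> V"
  shows "V \<in> tree_vertex_sets E r"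
proof -
  have "V \<in> tree_vertex_sets E r" if "S \<in> tree_vertex_sets E r" "S \<subseteq> V" for S
    using that
  proof (induction "card (V - S)" arbitrary: S rule: less_induct)
    case less
    show ?case
    proof (cases "S = V")
      case False
      then obtain z where z: "z \<in> V" "z \<notin> S" using less.prems(2) by blast
      then obtain u v where uv: "u \<in> S" "v \<notin> S" "E u v"
        using rtranclp_crosses_boundary[OF assms(3)[OF z(1)]] tree_vertex_sets_finite_root[OF less.prems(1)]
        by blast
      have "card (V - insert v S) < card (V - S)"
        using assms(1) assms(4)[OF uv(3)] uv(2) by (intro psubset_card_mono) auto
      moreover have "insert v S \<in> tree_vertex_sets E r"
        using less.prems(1) uv by (rule tree_vertex_sets.leaf)
      ultimately show ?thesis
        using less.hyps less.prems(2) assms(4)[OF uv(3)] by simp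
    qed (use less.prems in simp)
  qed
  from this[OF tree_vertex_sets.root] show ?thesis using assms(2) by simp
qed

lemma exists_residue_in_1_to_k:
  fixes b :: int
  assumes "0 < k"
  shows "\<exists>a. 1 \<le> a \<and> a \<le> k \<and> int k dvd b - int a"
proof (intro exI conjI)
  let ?a = "nat ((b - 1) mod int k) + 1"
  show "1 \<le> ?a" "?a \<le> k"
    using assms by (simp_all add: Suc_le_eq nat_less_iff)
  have "b - int ?a = int k * ((b - 1) div int k)"
    using assms by (simp add: minus_mod_eq_mult_div[symmetric])
  then show "int k dvd b - int ?a" by simp
qed

lemma sum_side_sign_insert_leaf:
  assumes "finite S" "u \<in> S" "v \<notin> S"
  shows "(\<Sum>x\<in>insert v S. side_sign (\<sigma>(v := \<not> \<sigma> u)) x * t x)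
    = (\<Sum>x\<in>S. side_sign \<sigma> x * t x) - side_sign \<sigma> u * t v"
proof -
  have "(\<Sum>x\<in>S. side_sign (\<sigma>(v := \<not> \<sigma> u)) x * t x) = (\<Sum>x\<in>S. side_sign \<sigma> x * t x)"
    using assms(3) by (intro sum.cong) (auto simp: side_sign_def)
  then show ?thesis
    using assms by (simp add: side_sign_def)
qed

definition realising_tour ::
  "('a \<Rightarrow> 'a \<Rightarrow> bool) \<Rightarrow> 'a \<Rightarrow> 'a set \<Rightarrow> nat \<Rightarrow> ('a \<Rightarrow> int) \<Rightarrow> 'a list \<Rightarrow> bool" where
  "realising_tour E r S k t w \<longleftrightarrow>
     hd w = r \<and> last w = r \<and> set w = S \<and> successively E w \<and>
     length w \<le> 2 * k * (card S - 1) + 1 \<and>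
     (\<forall>v\<in>S. 2 * int k dvd int (traversals w v) - 2 * t v)"

lemma realising_tour_insert_leaf:
  assumes tour: "realising_tour E r S k (t(u := t u - int a)) w"
    and uv: "u \<in> S" "v \<notin> S" "E u v" "symp E"
    and a: "1 \<le> a" "a \<le> k" "int k dvd t v - int a"
  shows "\<exists>w'. realising_tour E r (insert v S) k t w'"
proof -
  let ?t' = "t(u := t u - int a)"
  let ?C = "back_and_forth u v a"
  have w: "hd w = r" "last w = r" "set w = S" "successively E w"
    "length w \<le> 2 * k * (card S - 1) + 1" "\<forall>x\<in>S. 2 * int k dvd int (traversals w x) - 2 * ?t' x"
    using tour unfolding realising_tour_def by auto
  have "u \<noteq> v" using uv by auto
  from uv(1) w(3) have "u \<in> set w" by simp
  then obtain w' where w': "hd w' = hd w" "last w' = last w" "set w' = set w \<union> set ?C"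
    "length w' = length w + length ?C - 1" "\<And>x. traversals w' x = traversals w x + traversals ?C x"
    "\<And>P. successively P w \<Longrightarrow> successively P ?C \<Longrightarrow> successively P w'"
    by (rule splice_closed_walk[of u w ?C]) simp_all
  have residue_shift: "int (traversals w' x) - 2 * t x
      = (if x = v then 2 * (int a - t v) else int (traversals w x) - 2 * ?t' x)" for x
    using w'(5) traversals_back_and_forth[OF \<open>u \<noteq> v\<close>] traversals_eq_0_if_notin[of v w] w(3) uv(2)
    by auto
  have "2 * int k dvd 2 * (int a - t v)"
    using a(3) by (metis dvd_diff_commute mult_dvd_mono dvd_refl)
  then have "2 * int k dvd int (traversals w' x) - 2 * t x" if "x \<in> insert v S" for x
    using that w(6) unfolding residue_shift by auto
  moreover have "length w' \<le> 2 * k * (card (insert v S) - 1) + 1"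
  proof -
    have "finite S" using w(3) by blast
    then obtain n where "card S = Suc n" using uv(1) by (metis card_0_eq empty_iff not0_implies_Suc)
    then have "2 * k * (card (insert v S) - 1) = 2 * k * (card S - 1) + 2 * k"
      using \<open>finite S\<close> uv(2) by simp
    then show ?thesis using w(5) w'(4) a(2) by simp
  qed
  moreover have "successively E w'"
    by (rule w'(6)[OF w(4) successively_back_and_forth[where P = E, OF uv(3) sympD[OF uv(4,3)]]])
  moreover have "set w' = insert v S"
    using w'(3) w(3) a(1) uv(1) by (auto simp: set_back_and_forth)
  ultimately show ?thesis
    unfolding realising_tour_def using w'(1,2) w(1,2) by (intro exI[of _ w']) simp
qed

text \<open>
  \<sigma> is the bipartition of the tree. A new leaf v below u is served by a detour of 2a steps at u,
  with a = t(v) (mod k), and the target at u is lowered by a; since u and v lie on opposite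
  sides, the signed target sum is unchanged modulo k.
\<close>

lemma exists_realising_tours:
  assumes "S \<in> tree_vertex_sets E r" "symp E" "0 < k"
  shows "\<exists>\<sigma>. \<forall>t. int k dvd (\<Sum>v\<in>S. side_sign \<sigma> v * t v) \<longrightarrow> (\<exists>w. realising_tour E r S k t w)"
  using assms(1)
proof (induction rule: tree_vertex_sets.induct)
  case root
  show ?case
    by (intro exI[of _ "\<lambda>_. True"] allI impI exI[of _ "[r]"])
      (auto simp: side_sign_def realising_tour_def)
next
  case (leaf S u v)
  obtain \<sigma> where IH: "\<And>t. int k dvd (\<Sum>x\<in>S. side_sign \<sigma> x * t x) \<Longrightarrow> \<exists>w. realising_tour E r S k t w"
    using leaf.IH by blast
  have "finite S" using tree_vertex_sets_finite_root[OF leaf.hyps(1)] by blast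
  show ?case
  proof (intro exI[of _ "\<sigma>(v := \<not> \<sigma> u)"] allI impI)
    fix t assume balanced: "int k dvd (\<Sum>x\<in>insert v S. side_sign (\<sigma>(v := \<not> \<sigma> u)) x * t x)"
    obtain a where a: "1 \<le> a" "a \<le> k" "int k dvd t v - int a"
      using exists_residue_in_1_to_k[OF assms(3)] by blast
    have "(\<Sum>x\<in>S. side_sign \<sigma> x * (t(u := t u - int a)) x)
        = (\<Sum>x\<in>S. side_sign \<sigma> x * t x) - side_sign \<sigma> u * int a"
      using \<open>finite S\<close> leaf.hyps(2) by (simp add: sum.remove algebra_simps)
    also have "\<dots> = (\<Sum>x\<in>insert v S. side_sign (\<sigma>(v := \<not> \<sigma> u)) x * t x)
        + side_sign \<sigma> u * (t v - int a)"
      unfolding sum_side_sign_insert_leaf[OF \<open>finite S\<close> leaf.hyps(2,3)] by (simp add: algebra_simps)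
    finally have "int k dvd (\<Sum>x\<in>S. side_sign \<sigma> x * (t(u := t u - int a)) x)"
      using balanced a(3) by simp
    then obtain w where "realising_tour E r S k (t(u := t u - int a)) w"
      using IH by blast
    then show "\<exists>w. realising_tour E r (insert v S) k t w"
      using leaf.hyps(2-4) assms(2) a by (rule realising_tour_insert_leaf)
  qed
qed

section \<open>Balancing the targets\<close>

text \<open>
  The signed sum of the targets c(v) - (d(v) + traversals X v) div 2. When a tour realises them
  and X is appended to it, every vertex v gets degree 2 c(v) or 2 c(v) + 1 modulo 2k.
\<close>

definition colour_imbalance ::
  "'a set \<Rightarrow> ('a \<Rightarrow> 'a \<Rightarrow> bool) \<Rightarrow> ('a \<Rightarrow> nat) \<Rightarrow> ('a \<Rightarrow> bool) \<Rightarrow> 'a list \<Rightarrow> int" where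
  "colour_imbalance V E c \<sigma> X =
     (\<Sum>v\<in>V. side_sign \<sigma> v * (int (c v) - int ((deg V E v + traversals X v) div 2)))"

lemma even_sum_side_sign_iff: "even (\<Sum>v\<in>A. side_sign \<sigma> v * f v) \<longleftrightarrow> even (sum f A)"
proof -
  have "(\<Sum>v\<in>A. side_sign \<sigma> v * f v) - sum f A = (\<Sum>v\<in>A. (side_sign \<sigma> v - 1) * f v)"
    by (simp add: sum_subtractf left_diff_distrib)
  also have "even \<dots>"
    by (intro dvd_sum) (simp add: side_sign_def)
  finally show ?thesis by (simp add: even_diff)
qed

lemma odd_colour_imbalance_change_iff:
  assumes "finite V" "set X \<subseteq> V"
  shows "odd (colour_imbalance V E c \<sigma> X - colour_imbalance V E c \<sigma> [r]) \<longleftrightarrow>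
    odd (\<Sum>v\<in>set X. int ((deg V E v + traversals X v) div 2) - int (deg V E v div 2))"
    (is "_ \<longleftrightarrow> odd (sum ?g _)")
proof -
  have "colour_imbalance V E c \<sigma> [r] - colour_imbalance V E c \<sigma> X = (\<Sum>v\<in>V. side_sign \<sigma> v * ?g v)"
    unfolding colour_imbalance_def by (simp add: sum_subtractf[symmetric] algebra_simps)
  also have "\<dots> = (\<Sum>v\<in>set X. side_sign \<sigma> v * ?g v)"
    using assms by (intro sum.mono_neutral_right) (auto simp: traversals_eq_0_if_notin)
  finally have "colour_imbalance V E c \<sigma> X - colour_imbalance V E c \<sigma> [r]
      = - (\<Sum>v\<in>set X. side_sign \<sigma> v * ?g v)"
    by simp
  then show ?thesis by (simp add: even_sum_side_sign_iff)
qed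

lemma nice_exists_path_of_length_2:
  assumes "simple_graph V E" "nice V E" "E a b"
  shows "\<exists>x y z. E x y \<and> E y z \<and> x \<noteq> z"
proof -
  note G = simple_graphD[OF assms(1)]
  have ab: "a \<in> V" "b \<in> V" "a \<noteq> b" using G(3-5) assms(3) by metis+
  then obtain z where z: "z \<in> V" "z \<notin> {a, b}"
    using assms(2,3) unfolding nice_def is_K2_def by blast
  then have "E\<^sup>*\<^sup>* a z" using assms(2) ab(1) unfolding nice_def connected_graph_def by blast
  then obtain u v where uv: "u \<in> {a, b}" "v \<notin> {a, b}" "E u v"
    using rtranclp_crosses_boundary[of E a z "{a, b}"] z(2) by blast
  show ?thesis
  proof (cases "u = a")
    case True
    then show ?thesis using uv sympD[OF G(2) assms(3)] by blast
  next
    case False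
    then show ?thesis using uv assms(3) by blast
  qed
qed

lemma int_half_Suc_diff: "int (Suc d div 2) - int (d div 2) = of_bool (odd d)"
  by (cases "even d") (auto elim!: evenE oddE)

lemma exists_parity_switching_walk:
  assumes "simple_graph V E" "nice V E" "E a b"
  obtains X where "X \<noteq> []" "set X \<subseteq> V" "successively E X" "length X \<le> 3"
    "\<And>c \<sigma>. odd (colour_imbalance V E c \<sigma> X - colour_imbalance V E c \<sigma> [hd X])"
proof -
  note G = simple_graphD[OF assms(1)]
  note odd_change = odd_colour_imbalance_change_iff[OF G(1)]
  show thesis
  proof (cases "\<exists>u v. E u v \<and> even (deg V E u) \<noteq> even (deg V E v)")
    case True
    then obtain u v where uv: "E u v" "even (deg V E u) \<noteq> even (deg V E v)" by blast
    have "u \<noteq> v" using uv(1) G(3) by blast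
    then have "odd (colour_imbalance V E c \<sigma> [u, v] - colour_imbalance V E c \<sigma> [hd [u, v]])" for c \<sigma>
      using uv G(4,5)[OF uv(1)] by (subst odd_change) (auto simp: int_half_Suc_diff)
    then show thesis
      using uv G(4,5)[OF uv(1)] by (intro that[of "[u, v]"]) auto
  next
    case False
    obtain x y z where xyz: "E x y" "E y z" "x \<noteq> z"
      using nice_exists_path_of_length_2[OF assms] by blast
    have "x \<noteq> y" "y \<noteq> z" using xyz G(3) by blast+
    moreover have "even (deg V E x) = even (deg V E z)" using False xyz(1,2) by blast
    ultimately have "odd (colour_imbalance V E c \<sigma> [x, y, z] - colour_imbalance V E c \<sigma> [hd [x, y, z]])"
      for c \<sigma>
      using xyz G(4,5)[OF xyz(1)] G(5)[OF xyz(2)] by (subst odd_change) (auto simp: int_half_Suc_diff)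
    then show thesis
      using xyz G(4,5)[OF xyz(1)] G(5)[OF xyz(2)] by (intro that[of "[x, y, z]"]) auto
  qed
qed

lemma odd_modulus_halving:
  fixes b :: int
  assumes "odd k"
  shows "\<exists>m<k. int k dvd b - 2 * int m"
proof -
  obtain h where h: "int k + 1 = 2 * h" using assms by (metis even_plus_one_iff even_of_nat evenE)
  have k: "0 < int k" using assms by (simp add: odd_pos)
  define m where "m = nat ((b * h) mod int k)"
  have m: "int m = (b * h) mod int k" using k by (simp add: m_def)
  have "b - 2 * int m = int k * (2 * ((b * h) div int k) - b)"
    unfolding m minus_mult_div_eq_mod[symmetric] using arg_cong[OF h, of "(*) b"]
    by (simp add: algebra_simps)
  moreover have "m < k" using pos_mod_bound[OF k, of "b * h"] m by linarith
  ultimately show ?thesis by auto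
qed

lemma even_modulus_halving:
  fixes b :: int
  assumes "even k" "0 < k" "even b"
  shows "\<exists>m. 2 * m < k \<and> int k dvd b - 2 * int m"
proof -
  obtain j where j: "k = 2 * j" using assms(1) by blast
  obtain b' where b': "b = 2 * b'" using assms(3) by blast
  have j0: "0 < int j" using assms(2) j by simp
  define m where "m = nat (b' mod int j)"
  have m: "int m = b' mod int j" using j0 by (simp add: m_def)
  have "b - 2 * int m = int k * (b' div int j)"
    unfolding m b' j minus_mult_div_eq_mod[symmetric] by (simp add: algebra_simps)
  moreover have "2 * m < k" using pos_mod_bound[OF j0, of b'] m j by linarith
  ultimately show ?thesis by auto
qed

lemma balancing_walk:
  assumes "2 \<le> k" "k \<le> D + 1" "1 \<le> D" "length X0 \<le> 3"
    and "odd (colour_imbalance V E c \<sigma> X0 - colour_imbalance V E c \<sigma> [r])"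
    and "\<sigma> p = \<sigma> q \<or> k \<le> 2"
  obtains X m where "X = [r] \<or> X = X0" "2 * m + (length X - 1) \<le> 2 * D"
    "int k dvd colour_imbalance V E c \<sigma> X - int m * (side_sign \<sigma> p + side_sign \<sigma> q)"
proof -
  let ?\<beta> = "colour_imbalance V E c \<sigma>"
  let ?s = "side_sign \<sigma> p"
  have shift: "int k dvd \<beta> - int m * (side_sign \<sigma> p + side_sign \<sigma> q)"
    if "\<sigma> p = \<sigma> q \<or> m = 0" "int k dvd ?s * \<beta> - 2 * int m" for \<beta> m
  proof -
    have "\<beta> - int m * (side_sign \<sigma> p + side_sign \<sigma> q) = ?s * (?s * \<beta> - 2 * int m)"
      using that(1) by (auto simp: side_sign_def algebra_simps)
    then show ?thesis using that(2) by simp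
  qed
  show thesis
  proof (cases "odd k")
    case True
    then obtain m where m: "m < k" "int k dvd ?s * ?\<beta> [r] - 2 * int m"
      using odd_modulus_halving by blast
    have "\<sigma> p = \<sigma> q" using True assms(1,6) by presburger
    then show thesis
      using shift[OF _ m(2)] m(1) assms(2) by (intro that[of "[r]" m]) auto
  next
    case False
    obtain X where X: "X = [r] \<or> X = X0" "length X \<le> 3" "even (?\<beta> X)"
    proof (cases "even (?\<beta> [r])")
      case False
      then show ?thesis using that[of X0] assms(4,5) by (simp add: even_diff)
    qed (use that[of "[r]"] in simp)
    then obtain m where m: "2 * m < k" "int k dvd ?s * ?\<beta> X - 2 * int m"
      using even_modulus_halving[of k "?s * ?\<beta> X"] False assms(1) by auto
    have "\<sigma> p = \<sigma> q \<or> m = 0" using assms(6) m(1) by auto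
    moreover have "2 * m + (length X - 1) \<le> 2 * D"
      using m(1) False X(2) assms(2,3) by presburger
    ultimately show thesis
      using shift[OF _ m(2)] X(1) by (intro that) auto
  qed
qed

section \<open>The irregularising walk\<close>

lemma closed_walk_with_detour_and_tail:
  assumes "simple_graph V E" "hd W = r" "last W = r" "set W = V" "successively E W" "E p q"
    "X \<noteq> []" "hd X = r" "set X \<subseteq> V" "successively E X"
  obtains w where "is_walk V E w" "walk_length w = walk_length W + 2 * m + walk_length X"
    "\<And>v. traversals w v = traversals W v + (if v = p \<or> v = q then 2 * m else 0) + traversals X v"
proof -
  note G = simple_graphD[OF assms(1)]
  let ?C = "back_and_forth p q m"
  have p: "p \<in> set W" "p \<noteq> q" using G(3,4) assms(4,6) by blast+
  from p(1) obtain W' where W': "hd W' = hd W" "last W' = last W" "set W' = set W \<union> set ?C"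
    "length W' = length W + length ?C - 1" "\<And>x. traversals W' x = traversals W x + traversals ?C x"
    "\<And>P. successively P W \<Longrightarrow> successively P ?C \<Longrightarrow> successively P W'"
    by (rule splice_closed_walk[of p W ?C]) simp_all
  have "W \<noteq> []" "W' \<noteq> []" using p(1) W'(3) by auto
  show thesis
  proof (rule that[of "W' @ tl X"])
    have "set ?C \<subseteq> V" using G(4,5)[OF assms(6)] by (simp add: set_back_and_forth)
    moreover have "set (tl X) \<subseteq> V" using assms(9) by (cases X) auto
    moreover have "successively E (W' @ tl X)"
      using successively_append_tl[OF W'(6)[OF assms(5)] assms(10)] assms(2,3,8)
        successively_back_and_forth[of E p q, OF assms(6) sympD[OF G(2) assms(6)]] W'(2) \<open>W' \<noteq> []\<close>
      by simp
    ultimately show "is_walk V E (W' @ tl X)"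
      using W'(3) assms(4) \<open>W' \<noteq> []\<close> by (auto simp: is_walk_iff)
    show "walk_length (W' @ tl X) = walk_length W + 2 * m + walk_length X"
      using W'(4) \<open>W \<noteq> []\<close> assms(7) by (simp add: walk_length_def Suc_le_eq)
    show "traversals (W' @ tl X) v = traversals W v + (if v = p \<or> v = q then 2 * m else 0) + traversals X v"
      for v
      using traversals_append_tl[OF \<open>W' \<noteq> []\<close> assms(7)] W'(2,5) assms(3,8) p(2)
      by (simp add: traversals_back_and_forth)
  qed
qed

lemma mod_double_div_2_eq:
  fixes d c \<pi> k :: nat
  assumes "c < k" "\<pi> < 2" "2 * int k dvd int d - int (2 * c + \<pi>)"
  shows "d mod (2 * k) div 2 = c"
proof -
  have "int (d mod (2 * k)) = int (2 * c + \<pi>) mod int (2 * k)"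
    using assms(3) by (simp add: of_nat_mod mod_eq_dvd_iff)
  also have "\<dots> = int (2 * c + \<pi>)"
    using assms(1,2) by (intro mod_pos_pos_trivial) auto
  finally show ?thesis using assms(2) by simp
qed

lemma irregularising_walk_if_colour_encoded:
  assumes "simple_graph V E" "is_walk V E w" "proper_colouring V E k c"
    "\<And>v. v \<in> V \<Longrightarrow> deg_plus_walk V E w v mod (2 * k) div 2 = c v"
  shows "irregularising_walk V E w"
  unfolding irregularising_walk_def
proof (intro conjI allI impI assms(2))
  fix u v assume "E u v"
  then have "c u \<noteq> c v" "u \<in> V" "v \<in> V"
    using assms(3) simple_graphD(4,5)[OF assms(1)] by (auto simp: proper_colouring_def)
  then show "deg_plus_walk V E w u \<noteq> deg_plus_walk V E w v"
    using assms(4) by metis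
qed

lemma irregularising_walk_from_balanced_detour:
  assumes G: "simple_graph V E" and c: "proper_colouring V E k c"
    and tours: "\<And>t. int k dvd (\<Sum>v\<in>V. side_sign \<sigma> v * t v) \<Longrightarrow> \<exists>W. realising_tour E r V k t W"
    and pq: "E p q"
    and X: "X \<noteq> []" "hd X = r" "set X \<subseteq> V" "successively E X"
    and balanced: "int k dvd colour_imbalance V E c \<sigma> X - int m * (side_sign \<sigma> p + side_sign \<sigma> q)"
  shows "\<exists>w. irregularising_walk V E w \<and>
    walk_length w \<le> 2 * k * (card V - 1) + 2 * m + walk_length X"
proof -
  note G' = simple_graphD[OF G]
  define t where "t v = int (c v) - int ((deg V E v + traversals X v) div 2)
    - (if v = p \<or> v = q then int m else 0)" for v
  have "(\<Sum>v\<in>V. side_sign \<sigma> v * t v)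
      = colour_imbalance V E c \<sigma> X - int m * (side_sign \<sigma> p + side_sign \<sigma> q)"
  proof -
    have "p \<in> V" "q \<in> V" "p \<noteq> q" using G'(3-5) pq by metis+
    then have "(\<Sum>v\<in>V. side_sign \<sigma> v * (if v = p \<or> v = q then int m else 0))
        = int m * (side_sign \<sigma> p + side_sign \<sigma> q)"
      using G'(1) by (subst sum.mono_neutral_right[of V "{p, q}"]) (auto simp: algebra_simps)
    then show ?thesis
      unfolding t_def colour_imbalance_def by (simp add: right_diff_distrib sum_subtractf)
  qed
  then obtain W where "realising_tour E r V k t W"
    using tours[of t] balanced by auto
  then have W: "hd W = r" "last W = r" "set W = V" "successively E W"
    "walk_length W \<le> 2 * k * (card V - 1)" "\<forall>v\<in>V. 2 * int k dvd int (traversals W v) - 2 * t v"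
    unfolding realising_tour_def walk_length_def by auto
  obtain w where w: "is_walk V E w" "walk_length w = walk_length W + 2 * m + walk_length X"
    "\<And>v. traversals w v = traversals W v + (if v = p \<or> v = q then 2 * m else 0) + traversals X v"
    using closed_walk_with_detour_and_tail[OF G W(1-4) pq X] by blast
  have "deg_plus_walk V E w v mod (2 * k) div 2 = c v" if "v \<in> V" for v
  proof (rule mod_double_div_2_eq)
    let ?d = "deg V E v + traversals X v"
    show "c v < k" using c that by (simp add: proper_colouring_def)
    show "?d mod 2 < 2" by simp
    have "int ?d = 2 * int (?d div 2) + int (?d mod 2)"
      by (metis div_mult_mod_eq mult.commute of_nat_add of_nat_mult of_nat_numeral)
    then have "int (deg_plus_walk V E w v) - int (2 * c v + ?d mod 2) = int (traversals W v) - 2 * t v"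
      unfolding deg_plus_walk_def t_def w(3) by simp
    then show "2 * int k dvd int (deg_plus_walk V E w v) - int (2 * c v + ?d mod 2)"
      using W(6) that by simp
  qed
  then have "irregularising_walk V E w"
    using irregularising_walk_if_colour_encoded[OF G w(1) c] by blast
  with w(2) W(5) show ?thesis by auto
qed

lemma exists_short_irregularising_walk:
  assumes G: "simple_graph V E" and nice: "nice V E" and ab: "E a b"
  shows "\<exists>w. irregularising_walk V E w \<and>
    walk_length w \<le> 2 * chromatic_number V E * (card V - 1) + 2 * max_degree V E"
proof -
  note G' = simple_graphD[OF G]
  let ?k = "chromatic_number V E" and ?D = "max_degree V E"
  obtain c where c: "proper_colouring V E ?k c" using exists_chromatic_colouring[OF G] by blast
  have "c a \<noteq> c b" "c a < ?k" "c b < ?k"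
    using c G'(4,5)[OF ab] ab unfolding proper_colouring_def by auto
  then have "2 \<le> ?k" by linarith
  have "1 \<le> ?D" using max_degree_pos[OF G ab] by simp
  obtain X0 where X0: "X0 \<noteq> []" "set X0 \<subseteq> V" "successively E X0" "length X0 \<le> 3"
    "\<And>c \<sigma>. odd (colour_imbalance V E c \<sigma> X0 - colour_imbalance V E c \<sigma> [hd X0])"
    using exists_parity_switching_walk[OF G nice ab] by blast
  define r where "r = hd X0"
  have "r \<in> V" using X0(1,2) hd_in_set unfolding r_def by blast
  then have "V \<in> tree_vertex_sets E r"
    using nice G'(1,5) unfolding nice_def connected_graph_def
    by (intro connected_in_tree_vertex_sets) auto
  then obtain \<sigma> where tours:
    "\<And>t. int ?k dvd (\<Sum>v\<in>V. side_sign \<sigma> v * t v) \<Longrightarrow> \<exists>W. realising_tour E r V ?k t W"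
    using exists_realising_tours[OF _ G'(2)] \<open>2 \<le> ?k\<close> by fastforce
  obtain p q where pq: "E p q" "\<sigma> p = \<sigma> q \<or> ?k \<le> 2"
    using chromatic_number_le_2[of E \<sigma> V] ab by blast
  obtain X m where X: "X = [r] \<or> X = X0" "2 * m + (length X - 1) \<le> 2 * ?D"
    "int ?k dvd colour_imbalance V E c \<sigma> X - int m * (side_sign \<sigma> p + side_sign \<sigma> q)"
    using balancing_walk[OF \<open>2 \<le> ?k\<close> chromatic_number_le_max_degree[OF G] \<open>1 \<le> ?D\<close> X0(4)
        X0(5)[folded r_def] pq(2)]
    by blast
  have "X \<noteq> []" "hd X = r" "set X \<subseteq> V" "successively E X"
    using X(1) X0(1-3) \<open>r \<in> V\<close> r_def by auto
  from irregularising_walk_from_balanced_detour[OF G c tours pq(1) this X(3)]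
  show ?thesis using X(2) by (auto simp: walk_length_def)
qed

theorem corollary4p6:
  fixes V :: "'a set" and E :: "'a \<Rightarrow> 'a \<Rightarrow> bool" and n \<Delta> k :: nat
  assumes "simple_graph V E"
    and "nice V E"
    and "n = card V"
    and "\<Delta> = max_degree V E"
    and "k = chromatic_number V E"
  shows "(\<exists>w. irregularising_walk V E w) \<and> min_irreg_walk_length V E \<le> 2 * k * (n - 1) + 2 * \<Delta>"
proof -
  obtain w where w: "irregularising_walk V E w" "walk_length w \<le> 2 * k * (n - 1) + 2 * \<Delta>"
  proof (cases "\<exists>a b. E a b")
    case True
    then obtain a b where "E a b" by blast
    have "\<exists>w. irregularising_walk V E w \<and> walk_length w \<le> 2 * k * (n - 1) + 2 * \<Delta>"
      unfolding assms(3-5) by (rule exists_short_irregularising_walk[OF assms(1,2) \<open>E a b\<close>])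
    then show thesis using that by blast
  next
    case False
    obtain r where "r \<in> V" using assms(2) unfolding nice_def connected_graph_def by blast
    then have "irregularising_walk V E [r]"
      using False by (simp add: irregularising_walk_def is_walk_iff)
    then show thesis using that by (simp add: walk_length_def)
  qed
  have "min_irreg_walk_length V E \<le> walk_length w"
    unfolding min_irreg_walk_length_def by (rule Least_le) (use w(1) in blast)
  with w show ?thesis by auto
qed

end
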